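(* Let $R,r,I,\iota,L,G,P$ be real numbers with $R>0$, $0<r<R$, $I>0$, $0<\iota<I$, $\iota<r$, $L>0$, $G>0$, $P>0$ and $G+P-L>r-\iota$, and set $$a=G+P-r-L+\iota,\quad b=r-\iota+\tfrac{L}{2},\quad c=G+I-\iota+P,\quad d=\tfrac{L}{2}+\iota.$$ Let $M=\{(x,y)\in\mathbb{R}^2:0<x,y<1\}$, $\varphi(x,y)=xy(1-x)(1-y)$, $\omega=\frac{1}{\varphi}\mathrm{d}x\wedge\mathrm{d}y$, and $H:M\to\mathbb{R}$, $H(x,y)=c\ln(x)+d\ln(1-x)+a\ln(y)+b\ln(1-y)$. Then the solutions (in $M$) of the system $$\dot x=x(1-x)\big(a-(a+b)y\big),\qquad \dot y=y(1-y)\big(-c+(c+d)x\big)$$ are exactly the motions of the Hamiltonian system $(M,\omega,H)$.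
   Context: The Hamiltonian vector field $X_H$ is defined by $\omega(X_H,\cdot)=\mathrm{d}H$. A motion of the Hamiltonian system $(M,\omega,H)$ is a differentiable curve $\gamma$ in $M$ with $\frac{\mathrm{d}}{\mathrm{d}t}\gamma(t)|_{t=s}=X_H(\gamma(s))$ for all $s$. *)

theory Defs
  imports "HOL-Analysis.Analysis"
begin

definition phi :: "real \<times> real \<Rightarrow> real" where
  "phi p = fst p * snd p * (1 - fst p) * (1 - snd p)"

definition omega :: "real \<times> real \<Rightarrow> real \<times> real \<Rightarrow> real \<times> real \<Rightarrow> real" where
  "omega p u v = (fst u * snd v - snd u * fst v) / phi p"

definition hamiltonian_vf ::
  "('p::real_normed_vector \<Rightarrow> 'p \<Rightarrow> 'p \<Rightarrow> real) \<Rightarrow> ('p \<Rightarrow> real) \<Rightarrow> 'p \<Rightarrow> 'p" where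
  "hamiltonian_vf w H p = (THE X. (H has_derivative (\<lambda>v. w p X v)) (at p))"

definition is_motion ::
  "'p::real_normed_vector set \<Rightarrow> ('p \<Rightarrow> 'p \<Rightarrow> 'p \<Rightarrow> real) \<Rightarrow> ('p \<Rightarrow> real)
     \<Rightarrow> (real \<Rightarrow> 'p) \<Rightarrow> real set \<Rightarrow> bool" where
  "is_motion M w H \<gamma> T \<longleftrightarrow>
     (\<forall>s\<in>T. \<gamma> s \<in> M \<and> (\<gamma> has_vector_derivative hamiltonian_vf w H (\<gamma> s)) (at s))"

end

theory Submission
  imports Defs
begin

text \<open>Since \<open>\<omega>\<close> is \<open>1/\<phi>\<close> times the standard area form, \<open>\<omega>(X, \<cdot>) = dH\<close> forces
  \<open>X = \<phi> \<cdot> (\<partial>\<^sub>yH, -\<partial>\<^sub>xH)\<close>. For the logarithmic Hamiltonian the factor \<open>\<phi>\<close>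
  cancels the denominators of \<open>\<partial>\<^sub>xH = c/x - d/(1-x)\<close> and \<open>\<partial>\<^sub>yH = a/y - b/(1-y)\<close>,
  which turns Hamilton's equations into the given polynomial system. This works for arbitrary
  coefficients \<open>a, b, c, d\<close>.\<close>

lemma omega_eq_iff:
  assumes "phi p \<noteq> 0"
  shows "(\<forall>v. omega p X v = omega p Y v) \<longleftrightarrow> X = Y"
proof
  assume "\<forall>v. omega p X v = omega p Y v"
  from this[rule_format, of "(1, 0)"] this[rule_format, of "(0, 1)"] assms
  show "X = Y" by (cases X, cases Y) (auto simp: omega_def)
qed simp

lemma hamiltonian_vf_omega:
  assumes "phi p \<noteq> 0"
    and "(H has_derivative (\<lambda>v. Hx * fst v + Hy * snd v)) (at p)"
  shows "hamiltonian_vf omega H p = (phi p * Hy, - phi p * Hx)"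
  unfolding hamiltonian_vf_def
proof (rule the_equality)
  have "(\<lambda>v. Hx * fst v + Hy * snd v) = omega p (phi p * Hy, - phi p * Hx)"
    using assms(1) by (auto simp: fun_eq_iff omega_def field_simps)
  with assms(2) show H': "(H has_derivative omega p (phi p * Hy, - phi p * Hx)) (at p)"
    by simp
  fix Y assume "(H has_derivative omega p Y) (at p)"
  from has_derivative_unique[OF this H'] assms(1) show "Y = (phi p * Hy, - phi p * Hx)"
    by (metis omega_eq_iff)
qed

lemma is_motion_iff_has_vector_derivative:
  assumes "\<forall>t\<in>T. \<gamma> t \<in> M" and "\<And>p. p \<in> M \<Longrightarrow> hamiltonian_vf w H p = F p"
  shows "is_motion M w H \<gamma> T \<longleftrightarrow> (\<forall>t\<in>T. (\<gamma> has_vector_derivative F (\<gamma> t)) (at t))"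
  using assms by (auto simp: is_motion_def)

lemma has_derivative_log_hamiltonian:
  fixes x y a b c d :: real
  assumes "0 < x" "x < 1" "0 < y" "y < 1"
  shows "((\<lambda>(x, y). c * ln x + d * ln (1 - x) + a * ln y + b * ln (1 - y)) has_derivative
          (\<lambda>v. (c / x - d / (1 - x)) * fst v + (a / y - b / (1 - y)) * snd v)) (at (x, y))"
proof -
  have "(\<lambda>(x, y). c * ln x + d * ln (1 - x) + a * ln y + b * ln (1 - y)) =
        (\<lambda>q. c * ln (fst q) + d * ln (1 - fst q) + a * ln (snd q) + b * ln (1 - snd q))"
    by (auto simp: fun_eq_iff)
  moreover have "1 - x \<noteq> 0" "1 - y \<noteq> 0" using assms by auto
  ultimately show ?thesis using assms
    by (auto intro!: derivative_eq_intros simp: fun_eq_iff divide_simps) (simp add: algebra_simps)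
qed

lemma hamiltonian_vf_log_hamiltonian:
  fixes x y a b c d :: real
  assumes "0 < x" "x < 1" "0 < y" "y < 1"
  shows "hamiltonian_vf omega (\<lambda>(x, y). c * ln x + d * ln (1 - x) + a * ln y + b * ln (1 - y)) (x, y)
       = (x * (1 - x) * (a - (a + b) * y), y * (1 - y) * (- c + (c + d) * x))"
proof -
  have "phi (x, y) \<noteq> 0" using assms by (simp add: phi_def)
  moreover have "(phi (x, y) * (a / y - b / (1 - y)), - phi (x, y) * (c / x - d / (1 - x)))
      = (x * (1 - x) * (a - (a + b) * y), y * (1 - y) * (- c + (c + d) * x))"
    using assms by (simp add: phi_def field_simps)
  ultimately show ?thesis
    using hamiltonian_vf_omega[OF _ has_derivative_log_hamiltonian[OF assms]] by simp
qed

theorem mainTheorem6: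
  fixes R r I iota L G P :: real
  assumes "R > 0" "0 < r" "r < R" "I > 0" "0 < iota" "iota < I" "iota < r"
    "L > 0" "G > 0" "P > 0" "G + P - L > r - iota"
  defines "a \<equiv> G + P - r - L + iota"
      and "b \<equiv> r - iota + L / 2"
      and "c \<equiv> G + I - iota + P"
      and "d \<equiv> L / 2 + iota"
  defines "M \<equiv> {(x, y). 0 < x \<and> x < 1 \<and> 0 < y \<and> y < 1} :: (real \<times> real) set"
  defines "H \<equiv> (\<lambda>(x, y). c * ln x + d * ln (1 - x) + a * ln y + b * ln (1 - y))
              :: real \<times> real \<Rightarrow> real"
  shows "\<forall>(\<gamma> :: real \<Rightarrow> real \<times> real) T. open T \<longrightarrow> (\<forall>t\<in>T. \<gamma> t \<in> M) \<longrightarrow>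
     ((\<forall>t\<in>T. (\<gamma> has_vector_derivative
          (fst (\<gamma> t) * (1 - fst (\<gamma> t)) * (a - (a + b) * snd (\<gamma> t)),
           snd (\<gamma> t) * (1 - snd (\<gamma> t)) * (- c + (c + d) * fst (\<gamma> t)))) (at t))
      \<longleftrightarrow> is_motion M omega H \<gamma> T)"
proof (intro allI impI)
  fix \<gamma> :: "real \<Rightarrow> real \<times> real" and T :: "real set"
  assume "\<forall>t\<in>T. \<gamma> t \<in> M"
  moreover have "hamiltonian_vf omega H p =
      (fst p * (1 - fst p) * (a - (a + b) * snd p), snd p * (1 - snd p) * (- c + (c + d) * fst p))"
    if "p \<in> M" for p
    using that hamiltonian_vf_log_hamiltonian by (auto simp: M_def H_def)
  ultimately show "(\<forall>t\<in>T. (\<gamma> has_vector_derivative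
          (fst (\<gamma> t) * (1 - fst (\<gamma> t)) * (a - (a + b) * snd (\<gamma> t)),
           snd (\<gamma> t) * (1 - snd (\<gamma> t)) * (- c + (c + d) * fst (\<gamma> t)))) (at t))
      \<longleftrightarrow> is_motion M omega H \<gamma> T"
    by (simp add: is_motion_iff_has_vector_derivative)
qed

end
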